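(* Let $s\in\mathbb N$ and let $\mathbf n\in\mathbb N_0^d$ satisfy $\mathbf n<2^{2m_s+1}\mathbf 1$, $\mathbf n\notin B_{2m_s}$ and $\mathbf n\notin\{0,\dots,2^{m_s}-1\}^d$. Then $\widehat\tau_{\mathbf n}(\Delta^{(m_s)}_{\mathbf l})=0$ for all $\mathbf l<2^{m_s}\mathbf 1$, where $\tau=\tau_F$. The same holds with $\tau$ replaced by $\tau^{\boldsymbol\pi}=\tau_{F^{\boldsymbol\pi}}$ for every sequence $\boldsymbol\pi=(\boldsymbol\pi_s)$ of permutations $\boldsymbol\pi_s$ of $\{0,\dots,2^{m_s}-1\}^d$.
   Context: Fix $d\ge2$. $\mathbb G$ is the dyadic group: sequences $g=(g_k)_{k\ge0}$, $g_k\in\{0,1\}$, coordinatewise addition mod 2, product topology; $\mathbb G^d$ its $d$-th power. For $n\in\mathbb N_0$, $n=\sum_kn_k2^k$, $n_k\in\{0,1\}$. Dyadic interval of rank $k$: $\Delta^{(k)}_m=\{g: g_t=m_{k-1-t},\ 0\le t<k\}$; dyadic cube $\Delta^{(k)}_{\mathbf m}=\prod_l\Delta^{(k)}_{m^l}$. Vector order coordinatewise, $\mathbf 1=(1,\dots,1)$; $B_k=\{\mathbf n\in\mathbb N_0^d: 2^k\mathbf 1\le\mathbf n<2^{k+1}\mathbf 1\}$. Walsh functions $W_n(g)=\prod_k(-1)^{g_kn_k}$, $W_{\mathbf n}(\mathbf g)=\prod_lW_{n^l}(g^l)$; $W^{(k)}_{\mathbf n\mathbf m}$ is the constant value of $W_{\mathbf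 n}$ on $\Delta^{(k)}_{\mathbf m}$ ($\mathbf n,\mathbf m<2^k\mathbf 1$); $R_{k\mathbf 1}:=W_{2^k\mathbf 1}$. Quasimeasure: $\tau$ on dyadic cubes with $\tau(\Delta^{(k)}_{\mathbf m})=\sum_{\boldsymbol\sigma\in\{0,1\}^d}\tau(\Delta^{(k+1)}_{2\mathbf m+\boldsymbol\sigma})$; for a dyadic cube $\Delta$ of rank $r$, $\widehat\tau_{\mathbf n}(\Delta):=\sum_{\Delta^{(k)}_{\mathbf m}\subset\Delta}W^{(k)}_{\mathbf n\mathbf m}\tau(\Delta^{(k)}_{\mathbf m})$ for any $k\ge r$ with $\mathbf n<2^k\mathbf 1$. For nonempty closed $E$, $\tau_E$ is the unique nonnegative quasimeasure with $\tau_E(\mathbb G^d)=1$, $\tau_E(\Delta)=0$ iff $\Delta\cap E=\emptyset$, splitting the value of a cube meeting $E$ equally among its $2^d$ children that meet $E$. Let $m_1=0$, $m_{s+1}=2(2m_s+1)$. $F_s=\bigcup_{\mathbf m,\mathbf m'<2^{m_s}\mathbf 1}\{\mathbf g\in\Delta^{(2m_s)}_{2^{m_s}\mathbf m+\mathbf m'}: R_{2m_s\mathbf 1}(\mathbf g)=W^{(m_s)}_{\mathbf m\mathbf m'}\}$, $F=\bigcap_sF_s$; $F^{\boldsymbol\pi}_s$ is defined likewise with $W^{(m_s)}_{\boldsymbol\pi_s(\mathbf m)\,\mathbf m'}$, and $F^{\boldsymbol\pi}=\bigcap_sF^{\boldsymbol\pi}_s$. *)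

theory Defs
  imports Complex_Main "HOL-Library.Cardinality"
begin

text \<open>Points of the dyadic group G: sequences nat => bool (digit g_k = 1 iff g k).
  Points of G^d: 'd => nat => bool, the dimension d being CARD('d).
  Vectors in N_0^d: 'd => nat.\<close>

type_synonym 'd point = "'d \<Rightarrow> nat \<Rightarrow> bool"
type_synonym 'd vec = "'d \<Rightarrow> nat"

definition cube :: "nat \<Rightarrow> 'd vec \<Rightarrow> 'd point set" where
  "cube k m = {g. \<forall>l. \<forall>t<k. g l t = bit (m l) (k - 1 - t)}"

definition box :: "nat \<Rightarrow> 'd vec set" where
  "box N = {m. \<forall>l. m l < N}"

definition walsh1 :: "nat \<Rightarrow> (nat \<Rightarrow> bool) \<Rightarrow> real" where
  "walsh1 n g = (\<Prod>k\<in>{k. bit n k}. if g k then -1 else 1)"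

definition walsh :: "('d::finite) vec \<Rightarrow> 'd point \<Rightarrow> real" where
  "walsh n g = (\<Prod>l\<in>UNIV. walsh1 (n l) (g l))"

definition cube_pt :: "nat \<Rightarrow> 'd vec \<Rightarrow> 'd point" where
  "cube_pt k m = (\<lambda>l t. t < k \<and> bit (m l) (k - 1 - t))"

text \<open>W^(k)_{n m}: the (constant) value of W_n on the cube of rank k with index m.\<close>
definition walshk :: "nat \<Rightarrow> ('d::finite) vec \<Rightarrow> 'd vec \<Rightarrow> real" where
  "walshk k n m = walsh n (cube_pt k m)"

definition rad :: "nat \<Rightarrow> ('d::finite) point \<Rightarrow> real" where
  "rad k g = walsh (\<lambda>_. 2 ^ k) g"

definition Bblock :: "nat \<Rightarrow> 'd vec set" where
  "Bblock k = {n. \<forall>l. 2 ^ k \<le> n l \<and> n l < 2 ^ (k + 1)}"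

text \<open>Quasimeasures are represented as functions (rank, index vector) => real.
  Fourier coefficient hat tau_n(Delta^(r)_l), computed at the least admissible rank k
  (k >= r and n < 2^k 1); by the quasimeasure property the value does not depend on k.\<close>
definition hat_tau :: "(nat \<Rightarrow> ('d::finite) vec \<Rightarrow> real) \<Rightarrow> 'd vec \<Rightarrow> nat \<Rightarrow> 'd vec \<Rightarrow> real" where
  "hat_tau \<tau> n r l =
     (let k = (LEAST k. r \<le> k \<and> (\<forall>i. n i < 2 ^ k))
      in \<Sum>m\<in>{m. m \<in> box (2 ^ k) \<and> cube k m \<subseteq> cube r l}. walshk k n m * \<tau> k m)"

fun tauE :: "('d::finite) point set \<Rightarrow> nat \<Rightarrow> 'd vec \<Rightarrow> real" where
  "tauE E 0 m = 1"
| "tauE E (Suc k) m =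
     (if cube (Suc k) m \<inter> E = {} then 0
      else tauE E k (\<lambda>i. m i div 2) /
           real (card {\<sigma> \<in> box 2. cube (Suc k) (\<lambda>i. 2 * (m i div 2) + \<sigma> i) \<inter> E \<noteq> {}}))"

text \<open>m_s with m_1 = 0, m_{s+1} = 2(2 m_s + 1); ms s is meaningful for s >= 1.\<close>
primrec ms0 :: "nat \<Rightarrow> nat" where
  "ms0 0 = 0"
| "ms0 (Suc j) = 2 * (2 * ms0 j + 1)"

definition ms :: "nat \<Rightarrow> nat" where
  "ms s = ms0 (s - 1)"

definition Fs_pi :: "nat \<Rightarrow> (('d::finite) vec \<Rightarrow> 'd vec) \<Rightarrow> 'd point set" where
  "Fs_pi s p = (\<Union>m\<in>box (2 ^ ms s). \<Union>m'\<in>box (2 ^ ms s).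
      {g \<in> cube (2 * ms s) (\<lambda>i. 2 ^ ms s * m i + m' i).
         rad (2 * ms s) g = walshk (ms s) (p m) m'})"

definition F_pi :: "(nat \<Rightarrow> ('d::finite) vec \<Rightarrow> 'd vec) \<Rightarrow> 'd point set" where
  "F_pi \<pi> = (\<Inter>s\<in>{1..}. Fs_pi s (\<pi> s))"

definition Fset :: "('d::finite) point set" where
  "Fset = (\<Inter>s\<in>{1..}. Fs_pi s id)"

end

theory Submission
  imports Defs
begin

text \<open>
  The set F^\<pi> is cut out digit by digit: the constraint at level t only involves the
  digits up to t, it is void unless t = 2m_s, and at level 2m_s it prescribes the parity
  of the digit vector (g^1_t, ..., g^d_t), which leaves exactly half of the 2^d choices.
  Hence \<tau>_F has the same value c on all cubes of rank K that meet F. Taking for K the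
  least rank \<ge> m_s with n < 2^K (so K \<le> 2m_s + 1), the Fourier coefficient becomes c times
  a sum of W_n(P) over the admissible digit strings P of length K inside the given cube.

  Since n is not in the box, some n^i1 has a digit 1 at a place j in [m_s, K); since n is
  not in B_{2m_s}, some n^i0 has digit 0 at 2m_s. Flipping digit j of coordinate i1
  reverses the sign of W_n and affects admissibility only at level 2m_s (there are no
  other constrained levels between m_s and 2m_s + 1); if it does, flipping also digit 2m_s
  of coordinate i0 repairs this without changing W_n. This sign-reversing involution on
  admissible strings makes the sum vanish.
\<close>

section \<open>Binary digits, sums and products\<close>

lemma not_bit_nat_above:
  fixes x :: nat
  assumes "x < 2 ^ k" "k \<le> j"
  shows "\<not> bit x j"
proof -
  have "x < 2 ^ j"
    using assms power_increasing[of k j "2::nat"] by linarith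
  then show ?thesis by (simp add: bit_iff_odd)
qed

lemma finite_bit_nat: "finite {k. bit (x::nat) k}"
proof (rule finite_subset)
  show "{k. bit x k} \<subseteq> {..<x}"
    using not_bit_nat_above[OF less_exp[of x]] by (auto simp: not_less[symmetric])
qed simp

lemma exists_bit_between:
  fixes x :: nat
  assumes "2 ^ M \<le> x" "x < 2 ^ K"
  obtains j where "M \<le> j" "j < K" "bit x j"
proof (rule ccontr)
  assume "\<not> thesis"
  with that have no_bit: "\<And>j. M \<le> j \<Longrightarrow> j < K \<Longrightarrow> \<not> bit x j" by blast
  have "x = take_bit M x"
  proof (rule bit_eqI)
    fix j
    show "bit x j \<longleftrightarrow> bit (take_bit M x) j"
      using no_bit[of j] not_bit_nat_above[OF assms(2), of j]
      by (cases "j < M"; cases "j < K") (auto simp: bit_take_bit_iff)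
  qed
  then show False
    using assms(1) take_bit_nat_less_exp[of M x] by linarith
qed

lemma sum_sign_reversing_involution:
  fixes f :: "'a \<Rightarrow> 'b::linordered_ab_group_add"
  assumes "\<And>x. x \<in> A \<Longrightarrow> \<Phi> x \<in> A" "\<And>x. x \<in> A \<Longrightarrow> \<Phi> (\<Phi> x) = x"
    and "\<And>x. x \<in> A \<Longrightarrow> f (\<Phi> x) = - f x"
  shows "sum f A = 0"
proof -
  have "sum f A = sum (\<lambda>x. f (\<Phi> x)) A"
    by (rule sum.reindex_bij_witness[where i = \<Phi> and j = \<Phi>]) (use assms in auto)
  also have "\<dots> = - sum f A"
    by (simp add: assms(3) sum_negf)
  finally show ?thesis by simp
qed

lemma prod_fun_upd_remove:
  assumes "finite A" "i \<in> A"
  shows "(\<Prod>j\<in>A. F j ((\<sigma>(i := x)) j)) = F i x * (\<Prod>j\<in>A - {i}. F j (\<sigma> j))"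
proof -
  have "(\<Prod>j\<in>A - {i}. F j ((\<sigma>(i := x)) j)) = (\<Prod>j\<in>A - {i}. F j (\<sigma> j))"
    by (rule prod.cong) auto
  then show ?thesis
    using prod.remove[OF assms, of "\<lambda>j. F j ((\<sigma>(i := x)) j)"] by simp
qed

section \<open>Dyadic cubes and digit operations\<close>

primrec cube_index :: "nat \<Rightarrow> 'd point \<Rightarrow> 'd vec" where
  "cube_index 0 g = (\<lambda>i. 0)"
| "cube_index (Suc k) g = (\<lambda>i. 2 * cube_index k g i + of_bool (g i k))"

definition agree :: "nat \<Rightarrow> 'd point \<Rightarrow> 'd point \<Rightarrow> bool" where
  "agree k g h \<longleftrightarrow> (\<forall>i t. t < k \<longrightarrow> g i t = h i t)"

definition truncate :: "nat \<Rightarrow> 'd point \<Rightarrow> 'd point" where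
  "truncate k g = (\<lambda>i t. t < k \<and> g i t)"

definition shift :: "nat \<Rightarrow> 'd point \<Rightarrow> 'd point" where
  "shift M g = (\<lambda>i t. g i (t + M))"

definition set_digit :: "nat \<Rightarrow> 'd point \<Rightarrow> 'd vec \<Rightarrow> 'd point" where
  "set_digit k g \<sigma> = (\<lambda>i t. if t = k then odd (\<sigma> i) else g i t)"

definition flip_digit :: "'d \<Rightarrow> nat \<Rightarrow> 'd point \<Rightarrow> 'd point" where
  "flip_digit i j g = g(i := (g i)(j := \<not> g i j))"

lemma agree_refl [simp]: "agree k g g"
  by (simp add: agree_def)

lemma agree_trans: "agree k f g \<Longrightarrow> agree k g h \<Longrightarrow> agree k f h"
  by (simp add: agree_def)

lemma agree_mono: "agree k g h \<Longrightarrow> j \<le> k \<Longrightarrow> agree j g h"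
  by (simp add: agree_def)

lemma agree_truncate [simp]: "agree k h (truncate k g) \<longleftrightarrow> agree k h g"
  by (simp add: agree_def truncate_def)

lemma agree_set_digit: "j \<le> k \<Longrightarrow> agree j (set_digit k g \<sigma>) g"
  by (simp add: agree_def set_digit_def)

lemma agree_flip_digit: "k \<le> j \<Longrightarrow> agree k (flip_digit i j g) g"
  by (simp add: agree_def flip_digit_def)

lemma bit_cube_index: "bit (cube_index k g i) j \<longleftrightarrow> j < k \<and> g i (k - 1 - j)"
proof (induction k arbitrary: j)
  case (Suc k)
  then show ?case by (cases j) (auto simp: bit_0 bit_Suc)
qed simp

lemma cube_index_in_box: "cube_index k g \<in> box (2 ^ k)"
proof -
  have "cube_index k g i < 2 ^ k" for i
    by (induction k) auto
  then show ?thesis by (simp add: box_def)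
qed

lemma cube_index_agree: "agree k g h \<Longrightarrow> cube_index k g = cube_index k h"
  unfolding agree_def by (induction k) simp_all

lemma cube_index_Suc_div_2: "cube_index (Suc k) g i div 2 = cube_index k g i"
  by simp

lemma cube_index_set_digit:
  assumes "\<sigma> \<in> box 2"
  shows "cube_index (Suc k) (set_digit k g \<sigma>) = (\<lambda>i. 2 * cube_index k g i + \<sigma> i)"
proof (rule ext)
  fix i
  have "\<sigma> i = 0 \<or> \<sigma> i = 1"
    using assms by (auto simp: box_def less_2_cases_iff)
  then show "cube_index (Suc k) (set_digit k g \<sigma>) i = 2 * cube_index k g i + \<sigma> i"
    using cube_index_agree[OF agree_set_digit[of k k g \<sigma>]] by (auto simp: set_digit_def)
qed

lemma cube_index_add:
  "cube_index (M + k) g i = 2 ^ k * cube_index M g i + cube_index k (shift M g) i"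
  by (induction k) (simp_all add: shift_def add.commute)

lemma cube_pt_cube_index: "cube_pt k (cube_index k g) = truncate k g"
  by (auto simp: cube_pt_def truncate_def bit_cube_index fun_eq_iff)

lemma cube_index_cube_pt: "m \<in> box (2 ^ k) \<Longrightarrow> cube_index k (cube_pt k m) = m"
proof (intro ext bit_eqI)
  fix i j assume "m \<in> box (2 ^ k)"
  then have "m i < 2 ^ k" by (simp add: box_def)
  then show "bit (cube_index k (cube_pt k m) i) j \<longleftrightarrow> bit (m i) j"
    using not_bit_nat_above[of "m i" k j]
    by (cases "j < k") (auto simp: bit_cube_index cube_pt_def)
qed

lemma cube_eq_agree: "cube k m = {g. agree k g (cube_pt k m)}"
  by (auto simp: cube_def agree_def cube_pt_def)

lemma cube_cube_index: "cube k (cube_index k g) = {h. agree k h g}"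
  by (simp add: cube_eq_agree cube_pt_cube_index)

lemma mem_cube_iff_cube_index:
  "m \<in> box (2 ^ k) \<Longrightarrow> g \<in> cube k m \<longleftrightarrow> cube_index k g = m"
  by (metis cube_cube_index cube_eq_agree cube_index_agree cube_index_cube_pt agree_refl mem_Collect_eq)

lemma mem_cube_double:
  assumes "m \<in> box (2 ^ M)" "m' \<in> box (2 ^ M)"
  shows "g \<in> cube (2 * M) (\<lambda>i. 2 ^ M * m i + m' i) \<longleftrightarrow>
    cube_index M g = m \<and> cube_index M (shift M g) = m'"
proof -
  have digits_eq_iff: "2 ^ M * a + b = 2 ^ M * a' + b' \<longleftrightarrow> a = a' \<and> b = b'"
    if "b < 2 ^ M" "b' < 2 ^ M" for a b a' b' :: nat
  proof
    assume "2 ^ M * a + b = 2 ^ M * a' + b'"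
    then have "(2 ^ M * a + b) div 2 ^ M = (2 ^ M * a' + b') div 2 ^ M"
      "(2 ^ M * a + b) mod 2 ^ M = (2 ^ M * a' + b') mod 2 ^ M"
      by simp_all
    with that show "a = a' \<and> b = b'" by simp
  qed simp
  have "2 ^ M * m i + m' i < 2 ^ (2 * M)" for i
  proof -
    have "2 ^ M * m i + m' i < 2 ^ M * (m i + 1)"
      using assms(2) by (simp add: box_def)
    also have "\<dots> \<le> 2 ^ M * 2 ^ M"
      using assms(1) by (intro mult_le_mono2) (simp add: box_def Suc_le_eq)
    finally show ?thesis
      by (simp add: power_add[symmetric] mult_2)
  qed
  then have "(\<lambda>i. 2 ^ M * m i + m' i) \<in> box (2 ^ (2 * M))"
    by (simp add: box_def)
  then have "g \<in> cube (2 * M) (\<lambda>i. 2 ^ M * m i + m' i) \<longleftrightarrow>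
      (\<forall>i. 2 ^ M * cube_index M g i + cube_index M (shift M g) i = 2 ^ M * m i + m' i)"
    by (simp add: mem_cube_iff_cube_index mult_2 cube_index_add fun_eq_iff)
  also have "\<dots> \<longleftrightarrow> (\<forall>i. cube_index M g i = m i \<and> cube_index M (shift M g) i = m' i)"
    using digits_eq_iff cube_index_in_box[of M "shift M g"] assms(2) by (simp add: box_def)
  finally show ?thesis
    by (auto simp: fun_eq_iff)
qed

lemma truncate_flip_digit: "j < k \<Longrightarrow> truncate k (flip_digit i j g) = flip_digit i j (truncate k g)"
  by (auto simp: truncate_def flip_digit_def fun_eq_iff)

lemma flip_digit_flip_digit [simp]: "flip_digit i j (flip_digit i j g) = g"
  by (auto simp: flip_digit_def fun_eq_iff)

lemma flip_digit_commute: "flip_digit i j (flip_digit i' j' g) = flip_digit i' j' (flip_digit i j g)"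
  by (auto simp: flip_digit_def fun_eq_iff)

lemma agree_diagonal:
  assumes "\<And>u. agree u (hs (Suc u)) (hs u)"
  shows "agree (Suc t) (\<lambda>i u. hs (Suc u) i u) (hs (Suc t))"
  unfolding agree_def
proof (intro allI impI)
  fix i t' assume "t' < Suc t"
  have "hs u i t' = hs (Suc t') i t'" if "Suc t' \<le> u" for u
    using that
  proof (induction u rule: dec_induct)
    case (step u)
    then show ?case using assms[of u] by (simp add: agree_def)
  qed simp
  from this[of "Suc t"] \<open>t' < Suc t\<close> show "hs (Suc t') i t' = hs (Suc t) i t'" by simp
qed

section \<open>Quasimeasures of sets cut out digit by digit\<close>

definition admissible :: "(nat \<Rightarrow> 'd point \<Rightarrow> bool) \<Rightarrow> nat \<Rightarrow> 'd point \<Rightarrow> bool" where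
  "admissible C k g \<longleftrightarrow> (\<forall>t<k. C t g)"

locale digit_constraints =
  fixes C :: "nat \<Rightarrow> ('d::finite) point \<Rightarrow> bool" and N :: "nat \<Rightarrow> nat"
  assumes C_local: "agree (Suc t) g h \<Longrightarrow> C t g \<longleftrightarrow> C t h"
    and C_extendable: "\<exists>\<sigma>. C t (set_digit t g \<sigma>)"
    and C_branching: "card {\<sigma> \<in> box 2. C t (set_digit t g \<sigma>)} = N t"
begin

lemma admissible_agree: "agree k g h \<Longrightarrow> admissible C k g \<longleftrightarrow> admissible C k h"
  unfolding admissible_def using C_local agree_mono by (metis Suc_leI)

lemma admissible_extends:
  assumes "admissible C k g"
  obtains h where "\<forall>t. C t h" "agree k h g"
proof -
  define next_digit where "next_digit t h = (SOME \<sigma>. C t (set_digit t h \<sigma>))" for t h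
  have C_next: "C t (set_digit t h (next_digit t h))" for t h
    unfolding next_digit_def using C_extendable by (rule someI_ex)
  define hs where "hs = rec_nat g (\<lambda>t h. if t < k then h else set_digit t h (next_digit t h))"
  have hs_0: "hs 0 = g"
    and hs_Suc: "hs (Suc t) = (if t < k then hs t else set_digit t (hs t) (next_digit t (hs t)))" for t
    by (simp_all add: hs_def)
  have hs_step: "agree u (hs (Suc u)) (hs u)" for u
    by (simp add: hs_Suc agree_set_digit)
  have hs_agree: "agree k (hs u) g" for u
  proof (induction u)
    case (Suc u)
    have "agree k (set_digit u (hs u) \<sigma>) (hs u)" if "\<not> u < k" for \<sigma>
      using that by (simp add: agree_set_digit)
    then show ?case
      using Suc.IH by (auto simp: hs_Suc intro: agree_trans)
  qed (simp add: hs_0)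
  \<comment> \<open>hs u has the digits k, ..., u - 1 chosen admissibly; h is the diagonal limit.\<close>
  define h where "h = (\<lambda>i u. hs (Suc u) i u)"
  have "C t h" for t
  proof -
    have "C t (hs (Suc t))"
    proof (cases "t < k")
      case True
      then have "agree (Suc t) (hs (Suc t)) g"
        using hs_agree agree_mono by (metis Suc_leI)
      then show ?thesis
        using assms True C_local by (auto simp: admissible_def)
    qed (simp add: hs_Suc C_next)
    then show ?thesis
      using C_local[OF agree_diagonal[OF hs_step]] by (simp add: h_def)
  qed
  moreover have "agree k h g"
    using hs_agree by (simp add: agree_def h_def)
  ultimately show ?thesis
    using that by blast
qed

lemma cube_meets_iff_admissible:
  "cube k (cube_index k g) \<inter> {h. \<forall>t. C t h} \<noteq> {} \<longleftrightarrow> admissible C k g"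
proof
  assume "cube k (cube_index k g) \<inter> {h. \<forall>t. C t h} \<noteq> {}"
  then obtain h where h: "agree k h g" "\<forall>t. C t h"
    by (auto simp: cube_cube_index)
  then show "admissible C k g"
    using admissible_agree[OF h(1)] by (simp add: admissible_def)
next
  assume "admissible C k g"
  then obtain h where "\<forall>t. C t h" "agree k h g"
    by (rule admissible_extends)
  then show "cube k (cube_index k g) \<inter> {h. \<forall>t. C t h} \<noteq> {}"
    by (auto simp: cube_cube_index)
qed

lemma children_meeting_eq:
  assumes "admissible C k g"
  shows "{\<sigma> \<in> box 2. cube (Suc k) (\<lambda>i. 2 * cube_index k g i + \<sigma> i) \<inter> {h. \<forall>t. C t h} \<noteq> {}} =
    {\<sigma> \<in> box 2. C k (set_digit k g \<sigma>)}"
proof (intro Collect_cong conj_cong refl)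
  fix \<sigma> :: "'d vec" assume "\<sigma> \<in> box 2"
  then have "cube (Suc k) (\<lambda>i. 2 * cube_index k g i + \<sigma> i) \<inter> {h. \<forall>t. C t h} \<noteq> {} \<longleftrightarrow>
      admissible C (Suc k) (set_digit k g \<sigma>)"
    using cube_meets_iff_admissible[of "Suc k" "set_digit k g \<sigma>"]
    by (simp only: cube_index_set_digit)
  also have "\<dots> \<longleftrightarrow> C k (set_digit k g \<sigma>)"
    using assms admissible_agree[OF agree_set_digit[of k k g \<sigma>]]
    by (auto simp: admissible_def less_Suc_eq)
  finally show "cube (Suc k) (\<lambda>i. 2 * cube_index k g i + \<sigma> i) \<inter> {h. \<forall>t. C t h} \<noteq> {} \<longleftrightarrow>
      C k (set_digit k g \<sigma>)" .
qed

lemma tauE_cube_index: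
  "tauE {h. \<forall>t. C t h} k (cube_index k g) =
     (if admissible C k g then 1 / (\<Prod>t<k. real (N t)) else 0)"
proof (induction k arbitrary: g)
  case 0
  then show ?case by (simp add: admissible_def)
next
  case (Suc k)
  let ?E = "{h. \<forall>t. C t h}"
  have "tauE ?E (Suc k) (cube_index (Suc k) g) =
      (if cube (Suc k) (cube_index (Suc k) g) \<inter> ?E = {} then 0
       else tauE ?E k (cube_index k g) /
         real (card {\<sigma> \<in> box 2. cube (Suc k) (\<lambda>i. 2 * cube_index k g i + \<sigma> i) \<inter> ?E \<noteq> {}}))"
    by (simp only: tauE.simps cube_index_Suc_div_2)
  also have "\<dots> = (if admissible C (Suc k) g then 1 / (\<Prod>t<Suc k. real (N t)) else 0)"
  proof (cases "admissible C (Suc k) g")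
    case True
    then have "admissible C k g"
      by (simp add: admissible_def)
    then show ?thesis
      using True Suc.IH[of g] children_meeting_eq C_branching[of k g] cube_meets_iff_admissible[of "Suc k" g]
      by (simp del: cube_index.simps add: divide_divide_eq_left)
  next
    case False
    then show ?thesis
      using cube_meets_iff_admissible[of "Suc k" g] by (simp del: cube_index.simps)
  qed
  finally show ?case .
qed

end

section \<open>Walsh functions under digit changes\<close>

lemma abs_walsh1: "\<bar>walsh1 n h\<bar> = 1"
  by (simp add: walsh1_def abs_prod if_distrib cong: if_cong)

lemma abs_walsh: "\<bar>walsh n g\<bar> = 1"
  by (simp add: walsh_def abs_prod abs_walsh1)

lemma walsh1_fun_upd:
  "walsh1 n (h(j := b)) = (if bit n j \<and> b \<noteq> h j then - walsh1 n h else walsh1 n h)"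
proof (cases "bit n j")
  case True
  let ?F = "\<lambda>k b. if b then -1 else (1::real)"
  have "walsh1 n (h(j := b)) = ?F j b * (\<Prod>k\<in>{k. bit n k} - {j}. ?F k (h k))"
    unfolding walsh1_def using prod_fun_upd_remove[OF finite_bit_nat, of j n ?F h b] True by simp
  moreover have "walsh1 n h = ?F j (h j) * (\<Prod>k\<in>{k. bit n k} - {j}. ?F k (h k))"
    unfolding walsh1_def using prod_fun_upd_remove[OF finite_bit_nat, of j n ?F h "h j"] True by simp
  ultimately show ?thesis using True by auto
next
  case False
  then show ?thesis
    unfolding walsh1_def by (auto intro: prod.cong)
qed

lemma walsh_flip_digit:
  "walsh n (flip_digit i j g) = (if bit (n i) j then - walsh n g else walsh n g)"
proof -
  let ?F = "\<lambda>l h. walsh1 (n l) h"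
  have "walsh n (flip_digit i j g) = walsh1 (n i) ((g i)(j := \<not> g i j)) * (\<Prod>l\<in>UNIV - {i}. ?F l (g l))"
    unfolding walsh_def flip_digit_def
    using prod_fun_upd_remove[of UNIV i ?F g "(g i)(j := \<not> g i j)"] by simp
  moreover have "walsh n g = walsh1 (n i) (g i) * (\<Prod>l\<in>UNIV - {i}. ?F l (g l))"
    unfolding walsh_def using prod_fun_upd_remove[of UNIV i ?F g "g i"] by simp
  ultimately show ?thesis
    by (simp add: walsh1_fun_upd)
qed

lemma rad_eq: "rad k g = (\<Prod>i\<in>UNIV. if g i k then -1 else 1)"
  by (simp add: rad_def walsh_def walsh1_def bit_exp_iff)

lemma rad_flip_digit: "rad k (flip_digit i j g) = (if j = k then - rad k g else rad k g)"
  by (simp add: rad_def walsh_flip_digit bit_exp_iff)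

lemma abs_rad: "\<bar>rad k g\<bar> = 1"
  by (simp add: rad_def abs_walsh)

lemma rad_agree: "(\<And>i. g i k = h i k) \<Longrightarrow> rad k g = rad k h"
  by (simp add: rad_eq)

definition parity_sign :: "('d::finite) vec \<Rightarrow> real" where
  "parity_sign \<sigma> = (\<Prod>i\<in>UNIV. if odd (\<sigma> i) then -1 else 1)"

lemma rad_set_digit: "rad k (set_digit k g \<sigma>) = parity_sign \<sigma>"
  by (simp add: rad_eq parity_sign_def set_digit_def)

lemma parity_sign_toggle:
  assumes "\<sigma> \<in> box 2"
  shows "parity_sign (\<sigma>(i := 1 - \<sigma> i)) = - parity_sign \<sigma>"
proof -
  let ?F = "\<lambda>i x. if odd x then -1 else (1::real)"
  let ?R = "\<Prod>j\<in>UNIV - {i}. ?F j (\<sigma> j)"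
  have upd: "parity_sign (\<sigma>(i := x)) = ?F i x * ?R" for x
    unfolding parity_sign_def by (rule prod_fun_upd_remove) simp_all
  from upd[of "\<sigma> i"] have "parity_sign \<sigma> = ?F i (\<sigma> i) * ?R"
    by simp
  moreover have "\<sigma> i = 0 \<or> \<sigma> i = 1"
    using assms by (auto simp: box_def less_2_cases_iff)
  ultimately show ?thesis
    using upd[of "1 - \<sigma> i"] by (elim disjE) simp_all
qed

lemma card_parity_sign:
  assumes "\<bar>w\<bar> = 1"
  shows "card {\<sigma> \<in> box 2. parity_sign (\<sigma> :: 'd::finite vec) = w} = card {\<sigma> \<in> box 2. parity_sign (\<sigma> :: 'd vec) = 1}"
proof -
  fix i :: 'd
  define toggle where "toggle \<sigma> = \<sigma>(i := 1 - \<sigma> i)" for \<sigma> :: "'d vec"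
  have toggle: "toggle \<sigma> \<in> box 2" "toggle (toggle \<sigma>) = \<sigma>" "parity_sign (toggle \<sigma>) = - parity_sign \<sigma>"
    if "\<sigma> \<in> box 2" for \<sigma>
  proof -
    have "\<sigma> i < 2"
      using that by (simp add: box_def)
    then show "toggle (toggle \<sigma>) = \<sigma>"
      by (auto simp: toggle_def fun_eq_iff)
    show "toggle \<sigma> \<in> box 2"
      using that by (simp add: toggle_def box_def)
    show "parity_sign (toggle \<sigma>) = - parity_sign \<sigma>"
      unfolding toggle_def by (rule parity_sign_toggle[OF that])
  qed
  have "bij_betw toggle {\<sigma> \<in> box 2. parity_sign \<sigma> = -1} {\<sigma> \<in> box 2. parity_sign \<sigma> = 1}"
    by (rule bij_betw_byWitness[where f' = toggle]) (auto simp: toggle)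
  then have "card {\<sigma> \<in> box 2. parity_sign (\<sigma> :: 'd vec) = -1} = card {\<sigma> \<in> box 2. parity_sign (\<sigma> :: 'd vec) = 1}"
    by (rule bij_betw_same_card)
  then show ?thesis
    using assms by (auto simp: abs_if split: if_splits)
qed

lemma exists_parity_sign:
  assumes "\<bar>w\<bar> = 1"
  obtains \<sigma> :: "'d::finite vec" where "parity_sign \<sigma> = w"
proof -
  fix i :: 'd
  have zero: "parity_sign (\<lambda>_::'d. 0::nat) = 1"
    by (simp add: parity_sign_def)
  moreover have "parity_sign ((\<lambda>_::'d. 0::nat)(i := 1)) = -1"
    using parity_sign_toggle[of "\<lambda>_. 0" i] by (simp add: box_def zero)
  ultimately show ?thesis
    using assms that by (cases "w = 1") (auto simp: abs_if split: if_splits)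
qed

text \<open>For g in the cube of rank 2M with index 2^M m + m', this is W^(M)_{p(m) m'}.\<close>

definition target_sign :: "nat \<Rightarrow> (('d::finite) vec \<Rightarrow> 'd vec) \<Rightarrow> 'd point \<Rightarrow> real" where
  "target_sign M p g = walsh (p (cube_index M g)) (truncate M (shift M g))"

lemma abs_target_sign: "\<bar>target_sign M p g\<bar> = 1"
  by (simp add: target_sign_def abs_walsh)

lemma target_sign_agree: "agree (2 * M) g h \<Longrightarrow> target_sign M p g = target_sign M p h"
proof -
  assume agree: "agree (2 * M) g h"
  then have "cube_index M g = cube_index M h"
    using cube_index_agree agree_mono[OF agree, of M] by simp
  moreover have "truncate M (shift M g) = truncate M (shift M h)"
    using agree by (auto simp: truncate_def shift_def agree_def fun_eq_iff)
  ultimately show ?thesis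
    by (simp add: target_sign_def)
qed

lemma target_sign_flip_digit:
  assumes "M \<le> j"
  shows "target_sign M p (flip_digit i j g) =
    (if j < 2 * M \<and> bit (p (cube_index M g) i) (j - M) then - target_sign M p g else target_sign M p g)"
proof -
  have "cube_index M (flip_digit i j g) = cube_index M g"
    using assms by (simp add: cube_index_agree agree_flip_digit)
  moreover have "truncate M (shift M (flip_digit i j g)) =
      (if j < 2 * M then flip_digit i (j - M) (truncate M (shift M g)) else truncate M (shift M g))"
    using assms by (auto simp: truncate_def shift_def flip_digit_def fun_eq_iff)
  ultimately show ?thesis
    by (simp add: target_sign_def walsh_flip_digit)
qed

lemma Fs_pi_iff: "g \<in> Fs_pi s p \<longleftrightarrow> rad (2 * ms s) g = target_sign (ms s) p g"
proof -
  let ?M = "ms s"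
  let ?m = "cube_index ?M g" and ?m' = "cube_index ?M (shift ?M g)"
  have target_sign_eq: "target_sign ?M p g = walshk ?M (p ?m) ?m'"
    by (simp add: target_sign_def walshk_def cube_pt_cube_index)
  show ?thesis
  proof
    assume "g \<in> Fs_pi s p"
    then obtain m m' where "m \<in> box (2 ^ ?M)" "m' \<in> box (2 ^ ?M)"
      "g \<in> cube (2 * ?M) (\<lambda>i. 2 ^ ?M * m i + m' i)" "rad (2 * ?M) g = walshk ?M (p m) m'"
      unfolding Fs_pi_def by blast
    then show "rad (2 * ?M) g = target_sign ?M p g"
      by (simp add: mem_cube_double target_sign_eq)
  next
    assume "rad (2 * ?M) g = target_sign ?M p g"
    then have "g \<in> {g \<in> cube (2 * ?M) (\<lambda>i. 2 ^ ?M * ?m i + ?m' i). rad (2 * ?M) g = walshk ?M (p ?m) ?m'}"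
      by (simp add: mem_cube_double cube_index_in_box target_sign_eq)
    then show "g \<in> Fs_pi s p"
      unfolding Fs_pi_def using cube_index_in_box by blast
  qed
qed

lemma Fs_pi_flip_digit:
  assumes "ms s \<le> j" "j \<le> 2 * ms s"
  shows "flip_digit i j g \<in> Fs_pi s p \<longleftrightarrow>
    (g \<in> Fs_pi s p \<longleftrightarrow> \<not> (j = 2 * ms s \<or> bit (p (cube_index (ms s) g) i) (j - ms s)))"
proof -
  have unit: "x = 1 \<or> x = -1" if "\<bar>x\<bar> = (1::real)" for x
    using that by (auto simp: abs_if split: if_splits)
  show ?thesis
    using assms unit[OF abs_rad[of "2 * ms s" g]] unit[OF abs_target_sign[of "ms s" p g]]
    by (auto simp: Fs_pi_iff rad_flip_digit target_sign_flip_digit)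
qed

section \<open>The sets F^\<pi>\<close>

lemma ms_Suc: "1 \<le> s \<Longrightarrow> ms (Suc s) = 2 * (2 * ms s + 1)"
  by (cases s) (simp_all add: ms_def)

lemma ms_less: "1 \<le> a \<Longrightarrow> a < b \<Longrightarrow> ms a < ms b"
proof -
  have "strict_mono ms0"
    by (simp add: strict_mono_Suc_iff)
  then show "1 \<le> a \<Longrightarrow> a < b \<Longrightarrow> ms a < ms b"
    by (simp add: ms_def strict_mono_less)
qed

lemma double_ms_less: "1 \<le> a \<Longrightarrow> a < b \<Longrightarrow> 2 * ms a < ms b"
  using ms_Suc[of a] ms_less[of "Suc a" b] by (cases "Suc a = b") auto

lemma ms_eq_if_between:
  assumes "1 \<le> s" "1 \<le> s'" "ms s \<le> 2 * ms s'" "ms s' \<le> ms s"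
  shows "s' = s"
  using assms double_ms_less[of s' s] ms_less[of s s'] by (cases s' s rule: linorder_cases) auto

definition F_constraint :: "(nat \<Rightarrow> ('d::finite) vec \<Rightarrow> 'd vec) \<Rightarrow> nat \<Rightarrow> 'd point \<Rightarrow> bool" where
  "F_constraint \<pi> t g \<longleftrightarrow> (\<forall>s\<ge>1. 2 * ms s = t \<longrightarrow> g \<in> Fs_pi s (\<pi> s))"

lemma F_pi_eq_F_constraint: "F_pi \<pi> = {g. \<forall>t. F_constraint \<pi> t g}"
  by (auto simp: F_pi_def F_constraint_def)

lemma F_constraint_between:
  assumes "1 \<le> s" "ms s \<le> t" "t \<le> 2 * ms s"
  shows "F_constraint \<pi> t g \<longleftrightarrow> (t = 2 * ms s \<longrightarrow> g \<in> Fs_pi s (\<pi> s))"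
proof -
  have "s' = s" if "1 \<le> s'" "2 * ms s' = t" for s'
    using ms_eq_if_between[of s s'] assms that by simp
  then show ?thesis
    unfolding F_constraint_def using assms(1) by blast
qed

lemma F_constraint_set_digit:
  assumes "1 \<le> s"
  shows "F_constraint \<pi> (2 * ms s) (set_digit (2 * ms s) g \<sigma>) \<longleftrightarrow> parity_sign \<sigma> = target_sign (ms s) (\<pi> s) g"
  using target_sign_agree[OF agree_set_digit[of "2 * ms s" "2 * ms s" g \<sigma>]]
  by (simp add: F_constraint_between[OF assms, of "2 * ms s"] Fs_pi_iff rad_set_digit)

lemma F_constraint_local: "agree (Suc t) g h \<Longrightarrow> F_constraint \<pi> t g \<longleftrightarrow> F_constraint \<pi> t h"
proof -
  assume agree: "agree (Suc t) g h"
  have "g \<in> Fs_pi s p \<longleftrightarrow> h \<in> Fs_pi s p" if "2 * ms s = t" for s p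
  proof -
    have "rad t g = rad t h"
      using agree by (intro rad_agree) (simp add: agree_def)
    moreover have "target_sign (ms s) p g = target_sign (ms s) p h"
      using agree_mono[OF agree, of "2 * ms s"] that by (intro target_sign_agree) simp
    ultimately show ?thesis
      using that by (simp add: Fs_pi_iff)
  qed
  then show ?thesis
    by (auto simp: F_constraint_def)
qed

lemma F_constraint_set_digit_cases:
  fixes \<pi> :: "nat \<Rightarrow> ('d::finite) vec \<Rightarrow> 'd vec" and t :: nat and g :: "'d point"
  obtains (level) s where "1 \<le> s" "t = 2 * ms s"
      "\<And>\<sigma>. F_constraint \<pi> t (set_digit t g \<sigma>) \<longleftrightarrow> parity_sign \<sigma> = target_sign (ms s) (\<pi> s) g"
  | (free) "\<not> (\<exists>s\<ge>1. t = 2 * ms s)" "\<And>\<sigma>. F_constraint \<pi> t (set_digit t g \<sigma>)"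
proof (cases "\<exists>s\<ge>1. t = 2 * ms s")
  case True
  then obtain s where s: "1 \<le> s" "t = 2 * ms s" by blast
  show ?thesis
    by (rule level[OF s]) (simp add: s(2) F_constraint_set_digit[OF s(1)])
next
  case False
  then show ?thesis
    by (intro free) (auto simp: F_constraint_def)
qed

text \<open>At level 2m_s the digit vector must have prescribed parity, which half of box 2 has.\<close>

lemma digit_constraints_F_constraint:
  fixes \<pi> :: "nat \<Rightarrow> ('d::finite) vec \<Rightarrow> 'd vec"
  shows "digit_constraints (F_constraint \<pi>)
     (\<lambda>t. if \<exists>s\<ge>1. t = 2 * ms s then card {\<sigma> \<in> box 2. parity_sign (\<sigma> :: 'd vec) = 1}
          else card (box 2 :: 'd vec set))"
proof unfold_locales
  show "F_constraint \<pi> t g \<longleftrightarrow> F_constraint \<pi> t h" if "agree (Suc t) g h" for t and g h :: "'d point"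
    using that by (rule F_constraint_local)
next
  fix t and g :: "'d point"
  show "\<exists>\<sigma>. F_constraint \<pi> t (set_digit t g \<sigma>)"
  proof (cases rule: F_constraint_set_digit_cases[where \<pi> = \<pi> and t = t and g = g])
    case (level s)
    obtain \<sigma> :: "'d vec" where "parity_sign \<sigma> = target_sign (ms s) (\<pi> s) g"
      using exists_parity_sign[OF abs_target_sign] by blast
    then show ?thesis
      using level(3) by blast
  qed blast
next
  fix t and g :: "'d point"
  show "card {\<sigma> \<in> box 2. F_constraint \<pi> t (set_digit t g \<sigma>)} =
    (if \<exists>s\<ge>1. t = 2 * ms s then card {\<sigma> \<in> box 2. parity_sign (\<sigma> :: 'd vec) = 1}
     else card (box 2 :: 'd vec set))"
  proof (cases rule: F_constraint_set_digit_cases[where \<pi> = \<pi> and t = t and g = g])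
    case (level s)
    then have "card {\<sigma> \<in> box 2. F_constraint \<pi> t (set_digit t g \<sigma>)} = card {\<sigma> \<in> box 2. parity_sign (\<sigma> :: 'd vec) = 1}"
      using card_parity_sign[OF abs_target_sign] by simp
    then show ?thesis
      using level by auto
  qed auto
qed

lemma tauE_F_pi:
  obtains c where "\<And>g. tauE (F_pi \<pi>) k (cube_index k g) = (if admissible (F_constraint \<pi>) k g then c else 0)"
  using digit_constraints.tauE_cube_index[OF digit_constraints_F_constraint, of \<pi> k] that
  unfolding F_pi_eq_F_constraint by blast

section \<open>Vanishing of the Fourier coefficients\<close>

lemma sum_subcubes_eq_sum_points:
  fixes \<tau> :: "nat \<Rightarrow> ('d::finite) vec \<Rightarrow> real" and n l :: "'d vec"
  assumes "r \<le> K"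
  shows "(\<Sum>m\<in>{m. m \<in> box (2 ^ K) \<and> cube K m \<subseteq> cube r l}. walshk K n m * \<tau> K m) =
    (\<Sum>P\<in>{P. truncate K P = P \<and> P \<in> cube r l}. walsh n P * \<tau> K (cube_index K P))"
proof -
  have truncate_cube_pt: "truncate K (cube_pt K m) = cube_pt K m" for m :: "'d vec"
    by (auto simp: truncate_def cube_pt_def fun_eq_iff)
  have cube_pt_in_cube: "cube_pt K m \<in> cube K m" for m :: "'d vec"
    by (simp add: cube_eq_agree)
  have subcube: "cube K (cube_index K P) \<subseteq> cube r l" if "P \<in> cube r l" for P :: "'d point"
  proof
    fix h assume "h \<in> cube K (cube_index K P)"
    then have "agree r h P"
      using agree_mono[OF _ assms] by (simp add: cube_cube_index)
    then show "h \<in> cube r l"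
      using that by (auto simp: cube_eq_agree intro: agree_trans)
  qed
  show ?thesis
    by (rule sum.reindex_bij_witness[where i = "cube_index K" and j = "cube_pt K"])
      (auto simp: cube_index_cube_pt truncate_cube_pt cube_pt_in_cube subcube cube_pt_cube_index
        walshk_def cube_index_in_box)
qed

lemma F_constraint_flip_digit:
  assumes "1 \<le> s" "ms s \<le> j" "j \<le> 2 * ms s" "t \<le> 2 * ms s"
  shows "F_constraint \<pi> t (flip_digit i j g) \<longleftrightarrow>
    (F_constraint \<pi> t g \<longleftrightarrow>
      \<not> (t = 2 * ms s \<and> (j = 2 * ms s \<or> bit (\<pi> s (cube_index (ms s) g) i) (j - ms s))))"
proof (cases "t < ms s")
  case True
  then have "agree (Suc t) (flip_digit i j g) g"
    using assms(2) by (simp add: agree_flip_digit)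
  then show ?thesis
    using True F_constraint_local by auto
next
  case False
  then show ?thesis
    using assms Fs_pi_flip_digit[of s j i g "\<pi> s"]
    by (cases "t = 2 * ms s") (simp_all add: F_constraint_between[OF assms(1)])
qed

lemma sign_reversing_involution:
  fixes \<pi> :: "nat \<Rightarrow> ('d::finite) vec \<Rightarrow> 'd vec" and n :: "'d vec"
  assumes s: "1 \<le> s" and j: "ms s \<le> j" "j < K" and K: "K \<le> 2 * ms s + 1"
    and i1: "bit (n i1) j" and i0: "\<not> bit (n i0) (2 * ms s)"
  obtains \<Phi> :: "'d point \<Rightarrow> 'd point" where
    "\<And>P. \<Phi> (\<Phi> P) = P" "\<And>P. agree (ms s) (\<Phi> P) P"
    "\<And>P. truncate K P = P \<Longrightarrow> truncate K (\<Phi> P) = \<Phi> P"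
    "\<And>P. walsh n (\<Phi> P) = - walsh n P"
    "\<And>P. admissible (F_constraint \<pi>) K (\<Phi> P) \<longleftrightarrow> admissible (F_constraint \<pi>) K P"
proof -
  define M where "M = ms s"
  \<comment> \<open>Flipping digit j of coordinate i1 toggles the constraint at level 2M exactly when
    compensate holds; flipping digit 2M of coordinate i0 then toggles it back, unseen by W_n.\<close>
  define compensate where
    "compensate P \<longleftrightarrow> K = 2 * M + 1 \<and> (j = 2 * M \<or> bit (\<pi> s (cube_index M P) i1) (j - M))" for P
  define \<Phi> where
    "\<Phi> P = (if compensate P then flip_digit i0 (2 * M) (flip_digit i1 j P) else flip_digit i1 j P)" for P
  have agree: "agree M (\<Phi> P) P" for P
    using j(1) by (auto simp: \<Phi>_def M_def agree_def flip_digit_def)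
  have compensate_\<Phi>: "compensate (\<Phi> P) \<longleftrightarrow> compensate P" for P
    using cube_index_agree[OF agree[of P]] by (simp add: compensate_def)
  have "\<Phi> (\<Phi> P) = P" for P
    using compensate_\<Phi>[of P] by (simp add: \<Phi>_def flip_digit_commute)
  moreover have "truncate K (\<Phi> P) = \<Phi> P" if "truncate K P = P" for P
  proof (cases "compensate P")
    case True
    then have "2 * M < K"
      by (simp add: compensate_def)
    then show ?thesis
      using True that j(2) by (simp add: \<Phi>_def truncate_flip_digit)
  qed (use that j(2) in \<open>simp add: \<Phi>_def truncate_flip_digit\<close>)
  moreover have "walsh n (\<Phi> P) = - walsh n P" for P
    using i0 i1 by (simp add: \<Phi>_def M_def walsh_flip_digit)
  moreover have "F_constraint \<pi> t (\<Phi> P) \<longleftrightarrow> F_constraint \<pi> t P" if "t < K" for t P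
    using that j K
      F_constraint_flip_digit[OF s, of j t \<pi> i1 P]
      F_constraint_flip_digit[OF s, of "2 * ms s" t \<pi> i0 "flip_digit i1 j P"]
    by (auto simp: \<Phi>_def compensate_def M_def)
  then have "admissible (F_constraint \<pi>) K (\<Phi> P) \<longleftrightarrow> admissible (F_constraint \<pi>) K P" for P
    by (simp add: admissible_def)
  ultimately show ?thesis
    using that agree unfolding M_def by blast
qed

lemma flip_digits_exist:
  fixes n :: "'d vec"
  assumes "\<forall>i. n i < 2 ^ (2 * M + 1)" "n \<notin> Bblock (2 * M)" "n \<notin> box (2 ^ M)" "\<forall>i. n i < 2 ^ K"
  obtains i0 i1 j where "\<not> bit (n i0) (2 * M)" "M \<le> j" "j < K" "bit (n i1) j"
proof -
  obtain i0 where "\<not> (2 ^ (2 * M) \<le> n i0 \<and> n i0 < 2 ^ (2 * M + 1))"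
    using assms(2) by (auto simp: Bblock_def)
  then have "n i0 < 2 ^ (2 * M)"
    using assms(1) by (simp add: not_le)
  then have i0: "\<not> bit (n i0) (2 * M)"
    using not_bit_nat_above by blast
  obtain i1 where "2 ^ M \<le> n i1"
    using assms(3) by (auto simp: box_def not_less)
  then obtain j where "M \<le> j" "j < K" "bit (n i1) j"
    using exists_bit_between[of M "n i1" K] assms(4) by blast
  with i0 show ?thesis
    by (rule that)
qed

lemma hat_tau_F_pi_eq_0:
  fixes \<pi> :: "nat \<Rightarrow> ('d::finite) vec \<Rightarrow> 'd vec" and n :: "'d vec"
  assumes s: "1 \<le> s" and n_less: "\<forall>i. n i < 2 ^ (2 * ms s + 1)"
    and n_not_B: "n \<notin> Bblock (2 * ms s)" and n_not_box: "n \<notin> box (2 ^ ms s)"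
  shows "hat_tau (tauE (F_pi \<pi>)) n (ms s) l = 0"
proof -
  define M where "M = ms s"
  define K where "K = (LEAST k. M \<le> k \<and> (\<forall>i. n i < 2 ^ k))"
  have "M \<le> 2 * M + 1 \<and> (\<forall>i. n i < 2 ^ (2 * M + 1))"
    using n_less by (simp add: M_def)
  then have K: "M \<le> K" "\<forall>i. n i < 2 ^ K" "K \<le> 2 * M + 1"
    using LeastI[of "\<lambda>k. M \<le> k \<and> (\<forall>i. n i < 2 ^ k)"] Least_le[of "\<lambda>k. M \<le> k \<and> (\<forall>i. n i < 2 ^ k)"]
    unfolding K_def by blast+
  obtain i0 i1 j where "\<not> bit (n i0) (2 * M)" "M \<le> j" "j < K" "bit (n i1) j"
    using flip_digits_exist[OF n_less n_not_B n_not_box K(2)] unfolding M_def by blast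
  then obtain \<Phi> where \<Phi>: "\<And>P. \<Phi> (\<Phi> P) = P" "\<And>P. agree M (\<Phi> P) P"
    "\<And>P. truncate K P = P \<Longrightarrow> truncate K (\<Phi> P) = \<Phi> P"
    "\<And>P. walsh n (\<Phi> P) = - walsh n P"
    "\<And>P. admissible (F_constraint \<pi>) K (\<Phi> P) \<longleftrightarrow> admissible (F_constraint \<pi>) K P"
    using sign_reversing_involution[OF s, of j K n i1 i0 \<pi>] K(3) unfolding M_def by blast
  obtain c where c: "\<And>g. tauE (F_pi \<pi>) K (cube_index K g) = (if admissible (F_constraint \<pi>) K g then c else 0)"
    using tauE_F_pi[where \<pi> = \<pi> and k = K] by blast
  define T where "T = {P. truncate K P = P \<and> P \<in> cube M l}"
  have "hat_tau (tauE (F_pi \<pi>)) n M l = (\<Sum>P\<in>T. walsh n P * tauE (F_pi \<pi>) K (cube_index K P))"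
    unfolding hat_tau_def Let_def K_def[symmetric] T_def by (rule sum_subcubes_eq_sum_points[OF K(1)])
  also have "\<dots> = (\<Sum>P\<in>T. walsh n P * (if admissible (F_constraint \<pi>) K P then c else 0))"
    by (simp add: c)
  also have "\<dots> = 0"
  proof (rule sum_sign_reversing_involution)
    show "\<Phi> P \<in> T" if "P \<in> T" for P
      using that \<Phi>(2,3) by (auto simp: T_def cube_eq_agree intro: agree_trans)
  qed (simp_all add: \<Phi>)
  finally show ?thesis
    by (simp add: M_def)
qed

lemma Fset_eq_F_pi: "Fset = F_pi (\<lambda>_. id)"
  by (simp add: Fset_def F_pi_def)

theorem lemma4:
  fixes s :: nat and n :: "('d::finite) vec" and l :: "'d vec"
  assumes "CARD('d) \<ge> 2"
    and "s \<ge> 1"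
    and "\<forall>i. n i < 2 ^ (2 * ms s + 1)"
    and "n \<notin> Bblock (2 * ms s)"
    and "n \<notin> box (2 ^ ms s)"
    and "l \<in> box (2 ^ ms s)"
  shows "hat_tau (tauE (Fset :: 'd point set)) n (ms s) l = 0 \<and>
         (\<forall>\<pi> :: nat \<Rightarrow> 'd vec \<Rightarrow> 'd vec.
            (\<forall>t\<ge>1. bij_betw (\<pi> t) (box (2 ^ ms t)) (box (2 ^ ms t))) \<longrightarrow>
            hat_tau (tauE (F_pi \<pi>)) n (ms s) l = 0)"
  using hat_tau_F_pi_eq_0[OF assms(2-5)] by (simp add: Fset_eq_F_pi)

end
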